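(* Let $G$ be a finite connected groupoid with $G_0=\{e_1,\dots,e_r\}$, $A=\bigoplus_{i=1}^r A_i$ a unital ring with $A_i:=A_{e_i}$ having identity $1_i$, and $\alpha=(A_g,\alpha_g)_{g\in G}$ a unital partial action of $G$ on $A$. The following are equivalent: (i) $A\subset A\star_\alpha G$ is a separable extension; (ii) there exists $a\in C(A)$ (the center of $A$) such that $t_i(a)=1_i$ for all $i=1,\dots,r$.
   Context: A groupoid $G$ is a small category in which every morphism is invertible; $G_0$ is its object set (objects identified with identity morphisms), $s,t$ source and target; $gh$ is defined iff $s(g)=t(h)$; $G(e,f)$ is the set of morphisms from $e$ to $f$; $G$ is connected if $G(e,f)\neq\emptyset$ for all $e,f\in G_0$. A unital partial action of $G$ on $A$ is a family $\alpha=(A_g,\alpha_g)_{g\in G}$ where $A_{t(g)}$ is a two-sided ideal of $A$, $A_g=A1_g$ is a two-sided ideal of $A_{t(g)}$ with $1_g$ a central idempotent of $A$, $\alpha_g:A_{g^{-1}}\to A_g$ a ring isomorphism, such that $\alpha_e=\mathrm{id}_{A_e}$ for $e\in G_0$, $\alpha_h^{-1}(A_{g^{-1}}\cap A_h)\subseteq A_{(gh)^{-1}}$ and $\alpha_g(\alpha_h(x))=\alpha_{gh}(x)$ for $x\in\alpha_h^{-1}(A_{g^{-1}}\cap A_h)$, whenever $s(g)=t(h)$. The partial skew groupoid ring $A\star_\alpha G=\bigoplus_{g\in G}A_g\delta_g$ has multiplication $(a_g\delta_g)(b_h\delta_h)=\alpha_g(\alpha_{g^{-1}}(a_g)b_h)\delta_{gh}$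 if $s(g)=t(h)$ and $0$ otherwise; it is unital with $1=\sum_{e\in G_0}1_e\delta_e$, and $A$ is regarded as a subring via $a\mapsto\sum_{e\in G_0}(a1_e)\delta_e$. Trace maps: $t_{i,j}(a)=\sum_{g\in G(e_i,e_j)}\alpha_g(a1_{g^{-1}})$ and $t_j(a)=\sum_{i=1}^r t_{i,j}(a)$ for $a\in A$. A ring extension $R\subseteq S$ is separable if the multiplication map $S\otimes_R S\to S$ splits as a map of $(S,S)$-bimodules; equivalently there exists $x\in S\otimes_R S$ with $m(x)=1_S$ and $sx=xs$ for all $s\in S$. *)

theory Defs
  imports Main
begin

text \<open>A groupoid given by its set of morphisms, its set of objects (identified with
identity morphisms), source, target, partial composition and inversion.
cmp g h is the composite gh, defined when src g = tgt h.\<close>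

record 'g groupoid =
  mor  :: "'g set"
  obj  :: "'g set"
  src  :: "'g \<Rightarrow> 'g"
  tgt  :: "'g \<Rightarrow> 'g"
  cmp  :: "'g \<Rightarrow> 'g \<Rightarrow> 'g"
  ginv :: "'g \<Rightarrow> 'g"

definition is_groupoid :: "'g groupoid \<Rightarrow> bool" where
  "is_groupoid G \<longleftrightarrow>
     obj G \<subseteq> mor G \<and>
     (\<forall>g\<in>mor G. src G g \<in> obj G \<and> tgt G g \<in> obj G) \<and>
     (\<forall>e\<in>obj G. src G e = e \<and> tgt G e = e) \<and>
     (\<forall>g\<in>mor G. \<forall>h\<in>mor G. src G g = tgt G h \<longrightarrow>
        cmp G g h \<in> mor G \<and> src G (cmp G g h) = src G h \<and> tgt G (cmp G g h) = tgt G g) \<and>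
     (\<forall>f\<in>mor G. \<forall>g\<in>mor G. \<forall>h\<in>mor G. src G f = tgt G g \<and> src G g = tgt G h \<longrightarrow>
        cmp G (cmp G f g) h = cmp G f (cmp G g h)) \<and>
     (\<forall>g\<in>mor G. cmp G g (src G g) = g \<and> cmp G (tgt G g) g = g) \<and>
     (\<forall>g\<in>mor G. ginv G g \<in> mor G \<and> src G (ginv G g) = tgt G g \<and> tgt G (ginv G g) = src G g
        \<and> cmp G g (ginv G g) = tgt G g \<and> cmp G (ginv G g) g = src G g)"

definition connected_groupoid :: "'g groupoid \<Rightarrow> bool" where
  "connected_groupoid G \<longleftrightarrow>
     (\<forall>e\<in>obj G. \<forall>f\<in>obj G. \<exists>g\<in>mor G. src G g = e \<and> tgt G g = f)"

definition hom :: "'g groupoid \<Rightarrow> 'g \<Rightarrow> 'g \<Rightarrow> 'g set" where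
  "hom G e f = {g \<in> mor G. src G g = e \<and> tgt G g = f}"

text \<open>u g is the central idempotent 1_g, and A_g = A 1_g.\<close>
definition Aid :: "('g \<Rightarrow> 'a::ring_1) \<Rightarrow> 'g \<Rightarrow> 'a set" where
  "Aid u g = (\<lambda>a. a * u g) ` UNIV"

definition ring_iso_betw :: "('a::ring_1 \<Rightarrow> 'a) \<Rightarrow> 'a set \<Rightarrow> 'a set \<Rightarrow> bool" where
  "ring_iso_betw f X Y \<longleftrightarrow> bij_betw f X Y \<and>
     (\<forall>x\<in>X. \<forall>y\<in>X. f (x + y) = f x + f y \<and> f (x * y) = f x * f y)"

definition unital_partial_action ::
  "'g groupoid \<Rightarrow> ('g \<Rightarrow> 'a::ring_1) \<Rightarrow> ('g \<Rightarrow> 'a \<Rightarrow> 'a) \<Rightarrow> bool" where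
  "unital_partial_action G u \<alpha> \<longleftrightarrow>
     (\<forall>g\<in>mor G. u g * u g = u g \<and> (\<forall>x. u g * x = x * u g)) \<and>
     (\<forall>g\<in>mor G. Aid u g \<subseteq> Aid u (tgt G g)) \<and>
     (\<forall>g\<in>mor G. ring_iso_betw (\<alpha> g) (Aid u (ginv G g)) (Aid u g)) \<and>
     (\<forall>e\<in>obj G. \<forall>x\<in>Aid u e. \<alpha> e x = x) \<and>
     (\<forall>g\<in>mor G. \<forall>h\<in>mor G. src G g = tgt G h \<longrightarrow>
        (\<forall>x\<in>Aid u (ginv G h). \<alpha> h x \<in> Aid u (ginv G g) \<inter> Aid u h \<longrightarrow>
            x \<in> Aid u (ginv G (cmp G g h)) \<and> \<alpha> g (\<alpha> h x) = \<alpha> (cmp G g h) x))"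

text \<open>Elements of A \<star> G are represented as functions f with f g \<in> A_g for g \<in> G
and f g = 0 outside G; f corresponds to the sum of (f g) \<delta>_g.\<close>

definition skew_carrier :: "'g groupoid \<Rightarrow> ('g \<Rightarrow> 'a::ring_1) \<Rightarrow> ('g \<Rightarrow> 'a) set" where
  "skew_carrier G u = {f. (\<forall>g\<in>mor G. f g \<in> Aid u g) \<and> (\<forall>g. g \<notin> mor G \<longrightarrow> f g = 0)}"

definition skew_add :: "('g \<Rightarrow> 'a::ring_1) \<Rightarrow> ('g \<Rightarrow> 'a) \<Rightarrow> ('g \<Rightarrow> 'a)" where
  "skew_add f h = (\<lambda>k. f k + h k)"

definition skew_zero :: "'g \<Rightarrow> 'a::ring_1" where
  "skew_zero = (\<lambda>k. 0)"

definition skew_mult ::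
  "'g groupoid \<Rightarrow> ('g \<Rightarrow> 'a::ring_1 \<Rightarrow> 'a) \<Rightarrow> ('g \<Rightarrow> 'a) \<Rightarrow> ('g \<Rightarrow> 'a) \<Rightarrow> ('g \<Rightarrow> 'a)" where
  "skew_mult G \<alpha> f h = (\<lambda>k. \<Sum>(g, g') \<in> {(g, g') \<in> mor G \<times> mor G. src G g = tgt G g' \<and> cmp G g g' = k}.
       \<alpha> g (\<alpha> (ginv G g) (f g) * h g'))"

definition skew_one :: "'g groupoid \<Rightarrow> ('g \<Rightarrow> 'a::ring_1) \<Rightarrow> ('g \<Rightarrow> 'a)" where
  "skew_one G u = (\<lambda>k. if k \<in> obj G then u k else 0)"

definition skew_emb :: "'g groupoid \<Rightarrow> ('g \<Rightarrow> 'a::ring_1) \<Rightarrow> 'a \<Rightarrow> ('g \<Rightarrow> 'a)" where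
  "skew_emb G u a = (\<lambda>k. if k \<in> obj G then a * u k else 0)"

text \<open>Tensor product S \<otimes>_R S: formal finite sums of pairs (free abelian group on
S \<times> S, elements as integer-valued functions) modulo the subgroup generated by the
biadditivity and R-balancedness relations.\<close>

definition ind :: "'s \<times> 's \<Rightarrow> ('s \<times> 's \<Rightarrow> int)" where
  "ind p = (\<lambda>q. if q = p then 1 else 0)"

inductive_set tens_zero ::
  "'s set \<Rightarrow> ('s \<Rightarrow> 's \<Rightarrow> 's) \<Rightarrow> ('s \<Rightarrow> 's \<Rightarrow> 's) \<Rightarrow> 's set \<Rightarrow> ('s \<times> 's \<Rightarrow> int) set"
  for S :: "'s set" and add :: "'s \<Rightarrow> 's \<Rightarrow> 's" and mul :: "'s \<Rightarrow> 's \<Rightarrow> 's" and R :: "'s set"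
where
  tz_zero: "(\<lambda>q. 0) \<in> tens_zero S add mul R"
| tz_left: "a \<in> S \<Longrightarrow> a' \<in> S \<Longrightarrow> b \<in> S \<Longrightarrow>
     (\<lambda>q. ind (add a a', b) q - ind (a, b) q - ind (a', b) q) \<in> tens_zero S add mul R"
| tz_right: "a \<in> S \<Longrightarrow> b \<in> S \<Longrightarrow> b' \<in> S \<Longrightarrow>
     (\<lambda>q. ind (a, add b b') q - ind (a, b) q - ind (a, b') q) \<in> tens_zero S add mul R"
| tz_bal: "a \<in> S \<Longrightarrow> r \<in> R \<Longrightarrow> b \<in> S \<Longrightarrow>
     (\<lambda>q. ind (mul a r, b) q - ind (a, mul r b) q) \<in> tens_zero S add mul R"
| tz_plus: "x \<in> tens_zero S add mul R \<Longrightarrow> y \<in> tens_zero S add mul R \<Longrightarrow>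
     (\<lambda>q. x q + y q) \<in> tens_zero S add mul R"
| tz_neg: "x \<in> tens_zero S add mul R \<Longrightarrow> (\<lambda>q. - x q) \<in> tens_zero S add mul R"

text \<open>Formal sum of a list of pairs (the element sum of x_k \<otimes> y_k).\<close>
definition formal :: "('s \<times> 's) list \<Rightarrow> ('s \<times> 's \<Rightarrow> int)" where
  "formal xs = (\<lambda>q. int (count_list xs q))"

definition tens_eq ::
  "'s set \<Rightarrow> ('s \<Rightarrow> 's \<Rightarrow> 's) \<Rightarrow> ('s \<Rightarrow> 's \<Rightarrow> 's) \<Rightarrow> 's set \<Rightarrow> ('s \<times> 's) list \<Rightarrow> ('s \<times> 's) list \<Rightarrow> bool" where
  "tens_eq S add mul R xs ys \<longleftrightarrow> (\<lambda>q. formal xs q - formal ys q) \<in> tens_zero S add mul R"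

text \<open>Separability of R \<subseteq> S (S a ring with carrier S, addition, multiplication, zero, one):
there is x = sum of x_k \<otimes> y_k in S \<otimes>_R S with m(x) = 1 and s x = x s for all s \<in> S.\<close>
definition separable_ext ::
  "'s set \<Rightarrow> ('s \<Rightarrow> 's \<Rightarrow> 's) \<Rightarrow> ('s \<Rightarrow> 's \<Rightarrow> 's) \<Rightarrow> 's \<Rightarrow> 's \<Rightarrow> 's set \<Rightarrow> bool" where
  "separable_ext S add mul zero one R \<longleftrightarrow>
     (\<exists>xs. set xs \<subseteq> S \<times> S \<and>
        foldr (\<lambda>(a, b) acc. add (mul a b) acc) xs zero = one \<and>
        (\<forall>s\<in>S. tens_eq S add mul R
                  (map (\<lambda>(a, b). (mul s a, b)) xs) (map (\<lambda>(a, b). (a, mul b s)) xs)))"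

definition center :: "'a::ring_1 set" where
  "center = {a. \<forall>b. a * b = b * a}"

definition trace_ij ::
  "'g groupoid \<Rightarrow> ('g \<Rightarrow> 'a::ring_1) \<Rightarrow> ('g \<Rightarrow> 'a \<Rightarrow> 'a) \<Rightarrow> 'g \<Rightarrow> 'g \<Rightarrow> 'a \<Rightarrow> 'a" where
  "trace_ij G u \<alpha> ei ej a = (\<Sum>g\<in>hom G ei ej. \<alpha> g (a * u (ginv G g)))"

definition trace_j ::
  "'g groupoid \<Rightarrow> ('g \<Rightarrow> 'a::ring_1) \<Rightarrow> ('g \<Rightarrow> 'a \<Rightarrow> 'a) \<Rightarrow> 'g \<Rightarrow> 'a \<Rightarrow> 'a" where
  "trace_j G u \<alpha> ej a = (\<Sum>ei\<in>obj G. trace_ij G u \<alpha> ei ej a)"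

end

theory Submission
  imports Defs
begin

text \<open>
  Every tensor in S \<otimes>_A S, where S = A \<star>_\<alpha> G, can be brought into the form
  \<Sum> c(p,q) \<delta>_p \<otimes> 1_q \<delta>_q, because
  x \<delta>_p \<otimes> y \<delta>_q = x \<alpha>_p(y 1_{p\<inverse>}) \<delta>_p \<otimes> 1_q \<delta>_q;
  the coefficient maps c(p,q)(x \<otimes> y) = x_p \<alpha>_p(y_q 1_{p\<inverse>}) are biadditive and
  A-balanced, so an identity of tensors holds iff it holds coefficientwise.
  If w is a separability element, commuting w with A makes a = \<Sum>_e c(e,e) central, and
  commuting w with \<delta>_g gives c(g,g\<inverse>) = \<alpha>_g(c(e,e) 1_{g\<inverse>}) = \<alpha>_g(a 1_{g\<inverse>})
  for e = s(g) (the 1_e being orthogonal); then m(w) = 1 says t_e(a) = 1_e.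
  Conversely, for central a with t_e(a) = 1_e, put w = \<Sum>_g \<alpha>_g(a 1_{g\<inverse>}) \<delta>_g \<otimes> \<delta>_{g\<inverse>}.
  For every z in S, both z w and w z have the coefficients c(p,q) = \<alpha>_p(a 1_{p\<inverse>}) z_{pq}
  (and 0 if pq is undefined), while m(w) = \<Sum>_e t_e(a) \<delta>_e = 1.
\<close>

locale groupoid =
  fixes G :: "'g groupoid"
  assumes is_groupoid: "is_groupoid G"
begin

lemma obj_in_mor [simp]: "e \<in> obj G \<Longrightarrow> e \<in> mor G"
  and src_in_obj [simp]: "g \<in> mor G \<Longrightarrow> src G g \<in> obj G"
  and tgt_in_obj [simp]: "g \<in> mor G \<Longrightarrow> tgt G g \<in> obj G"
  and src_obj [simp]: "e \<in> obj G \<Longrightarrow> src G e = e"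
  and tgt_obj [simp]: "e \<in> obj G \<Longrightarrow> tgt G e = e"
  using is_groupoid unfolding is_groupoid_def by blast+

lemma cmp_in_mor [simp]: "g \<in> mor G \<Longrightarrow> h \<in> mor G \<Longrightarrow> src G g = tgt G h \<Longrightarrow> cmp G g h \<in> mor G"
  and src_cmp [simp]: "g \<in> mor G \<Longrightarrow> h \<in> mor G \<Longrightarrow> src G g = tgt G h \<Longrightarrow> src G (cmp G g h) = src G h"
  and tgt_cmp [simp]: "g \<in> mor G \<Longrightarrow> h \<in> mor G \<Longrightarrow> src G g = tgt G h \<Longrightarrow> tgt G (cmp G g h) = tgt G g"
  using is_groupoid unfolding is_groupoid_def by blast+

lemma cmp_assoc:
  "f \<in> mor G \<Longrightarrow> g \<in> mor G \<Longrightarrow> h \<in> mor G \<Longrightarrow> src G f = tgt G g \<Longrightarrow> src G g = tgt G h \<Longrightarrow>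
   cmp G (cmp G f g) h = cmp G f (cmp G g h)"
  using is_groupoid unfolding is_groupoid_def by blast

lemma cmp_src [simp]: "g \<in> mor G \<Longrightarrow> cmp G g (src G g) = g"
  and cmp_tgt [simp]: "g \<in> mor G \<Longrightarrow> cmp G (tgt G g) g = g"
  and ginv_in_mor [simp]: "g \<in> mor G \<Longrightarrow> ginv G g \<in> mor G"
  and src_ginv [simp]: "g \<in> mor G \<Longrightarrow> src G (ginv G g) = tgt G g"
  and tgt_ginv [simp]: "g \<in> mor G \<Longrightarrow> tgt G (ginv G g) = src G g"
  and cmp_ginv_right [simp]: "g \<in> mor G \<Longrightarrow> cmp G g (ginv G g) = tgt G g"
  and cmp_ginv_left [simp]: "g \<in> mor G \<Longrightarrow> cmp G (ginv G g) g = src G g"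
  using is_groupoid unfolding is_groupoid_def by blast+

lemma cmp_cancel_right:
  assumes "g \<in> mor G" "h \<in> mor G" "src G g = tgt G h"
  shows "cmp G (cmp G g h) (ginv G h) = g"
  using assms cmp_src[of g] by (simp add: cmp_assoc)

lemma cmp_cancel_left:
  assumes "g \<in> mor G" "h \<in> mor G" "src G h = tgt G g"
  shows "cmp G (ginv G h) (cmp G h g) = g"
  using assms by (simp add: cmp_assoc[symmetric])

lemma ginv_unique:
  assumes "g \<in> mor G" "h \<in> mor G" "src G g = tgt G h" "cmp G g h = src G h"
  shows "g = ginv G h"
  using cmp_cancel_right[OF assms(1-3)] assms cmp_tgt[of "ginv G h"] by simp

lemma ginv_ginv [simp]: "g \<in> mor G \<Longrightarrow> ginv G (ginv G g) = g"
  using ginv_unique[of g "ginv G g"] by simp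

lemma ginv_obj [simp]: "e \<in> obj G \<Longrightarrow> ginv G e = e"
  using ginv_unique[of e e] cmp_src[of e] by simp

lemma ginv_cmp:
  assumes "g \<in> mor G" "h \<in> mor G" "src G g = tgt G h"
  shows "ginv G (cmp G g h) = cmp G (ginv G h) (ginv G g)"
proof (rule ginv_unique[symmetric])
  show "cmp G (cmp G (ginv G h) (ginv G g)) (cmp G g h) = src G (cmp G g h)"
    using assms cmp_cancel_left[of h g] by (simp add: cmp_assoc)
qed (use assms in simp_all)

definition factorizations :: "'g \<Rightarrow> ('g \<times> 'g) set" where
  "factorizations k = {(g, h) \<in> mor G \<times> mor G. src G g = tgt G h \<and> cmp G g h = k}"

lemma factorizations_not_mor: "k \<notin> mor G \<Longrightarrow> factorizations k = {}"
  unfolding factorizations_def by auto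

lemma factorizations_left_eq: "(g, h) \<in> factorizations k \<Longrightarrow> g = cmp G k (ginv G h)"
  unfolding factorizations_def using cmp_cancel_right by auto

lemma factorizations_right_eq: "(g, h) \<in> factorizations k \<Longrightarrow> h = cmp G (ginv G g) k"
  unfolding factorizations_def using cmp_cancel_left by auto

lemma factorizations_obj:
  assumes e: "e \<in> obj G"
  shows "factorizations e = (\<lambda>g. (g, ginv G g)) ` {g \<in> mor G. tgt G g = e}"
proof (intro equalityI subsetI)
  fix x assume x: "x \<in> factorizations e"
  then obtain g h where gh: "x = (g, h)" "g \<in> mor G" "h \<in> mor G" "src G g = tgt G h" "cmp G g h = e"
    unfolding factorizations_def by auto
  then have "tgt G g = e" using e tgt_cmp[of g h] by simp
  moreover have "h = ginv G g"
    using factorizations_right_eq[of g h e] x gh calculation cmp_src[of "ginv G g"] by simp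
  ultimately show "x \<in> (\<lambda>g. (g, ginv G g)) ` {g \<in> mor G. tgt G g = e}" using gh by auto
qed (auto simp: factorizations_def)

end

locale partial_action = groupoid G for G :: "'g groupoid" +
  fixes u :: "'g \<Rightarrow> 'a::ring_1" and \<alpha> :: "'g \<Rightarrow> 'a \<Rightarrow> 'a"
  assumes unital_partial_action: "unital_partial_action G u \<alpha>"
begin

lemma u_idem [simp]: "g \<in> mor G \<Longrightarrow> u g * u g = u g"
  and u_commute: "g \<in> mor G \<Longrightarrow> u g * x = x * u g"
  and Aid_subset_tgt: "g \<in> mor G \<Longrightarrow> Aid u g \<subseteq> Aid u (tgt G g)"
  and alpha_ring_iso: "g \<in> mor G \<Longrightarrow> ring_iso_betw (\<alpha> g) (Aid u (ginv G g)) (Aid u g)"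
  and alpha_obj: "e \<in> obj G \<Longrightarrow> x \<in> Aid u e \<Longrightarrow> \<alpha> e x = x"
  using unital_partial_action unfolding unital_partial_action_def by blast+

lemma alpha_cmp:
  "g \<in> mor G \<Longrightarrow> h \<in> mor G \<Longrightarrow> src G g = tgt G h \<Longrightarrow> x \<in> Aid u (ginv G h) \<Longrightarrow>
   \<alpha> h x \<in> Aid u (ginv G g) \<Longrightarrow> \<alpha> h x \<in> Aid u h \<Longrightarrow>
   x \<in> Aid u (ginv G (cmp G g h)) \<and> \<alpha> g (\<alpha> h x) = \<alpha> (cmp G g h) x"
  using unital_partial_action unfolding unital_partial_action_def by blast

lemma Aid_iff: "g \<in> mor G \<Longrightarrow> x \<in> Aid u g \<longleftrightarrow> x * u g = x"
  unfolding Aid_def by (auto simp: mult.assoc intro: range_eqI[of _ _ x])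

lemma Aid_mult_u [simp]: "g \<in> mor G \<Longrightarrow> x \<in> Aid u g \<Longrightarrow> x * u g = x"
  and u_mult_Aid [simp]: "g \<in> mor G \<Longrightarrow> x \<in> Aid u g \<Longrightarrow> u g * x = x"
  by (simp_all add: Aid_iff u_commute)

lemma Aid_mult_left [simp]: "g \<in> mor G \<Longrightarrow> x \<in> Aid u g \<Longrightarrow> y * x \<in> Aid u g"
  and Aid_zero [simp]: "g \<in> mor G \<Longrightarrow> 0 \<in> Aid u g"
  and Aid_add: "g \<in> mor G \<Longrightarrow> x \<in> Aid u g \<Longrightarrow> y \<in> Aid u g \<Longrightarrow> x + y \<in> Aid u g"
  and Aid_u [simp]: "g \<in> mor G \<Longrightarrow> u g \<in> Aid u g"
  by (simp_all add: Aid_iff mult.assoc distrib_right)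

lemma Aid_mult_right [simp]: "g \<in> mor G \<Longrightarrow> x \<in> Aid u g \<Longrightarrow> x * y \<in> Aid u g"
  by (metis Aid_iff mult.assoc u_commute)

lemma mult_u_in_Aid [simp]: "g \<in> mor G \<Longrightarrow> x * u g \<in> Aid u g"
  and u_mult_in_Aid [simp]: "g \<in> mor G \<Longrightarrow> u g * x \<in> Aid u g"
  by simp_all

lemma Aid_sum: "finite I \<Longrightarrow> g \<in> mor G \<Longrightarrow> (\<And>i. i \<in> I \<Longrightarrow> f i \<in> Aid u g) \<Longrightarrow> sum f I \<in> Aid u g"
  by (induction I rule: finite_induct) (auto intro: Aid_add)

lemma Aid_sum_list: "g \<in> mor G \<Longrightarrow> (\<And>x. x \<in> set xs \<Longrightarrow> f x \<in> Aid u g) \<Longrightarrow> (\<Sum>x\<leftarrow>xs. f x) \<in> Aid u g"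
  by (induction xs) (auto intro: Aid_add)

lemma u_mult_u_tgt: "g \<in> mor G \<Longrightarrow> u g * u (tgt G g) = u g"
  using Aid_subset_tgt[of g] Aid_u[of g] by (meson Aid_mult_u obj_in_mor subsetD tgt_in_obj)

lemma alpha_in_Aid [simp]: "g \<in> mor G \<Longrightarrow> x \<in> Aid u (ginv G g) \<Longrightarrow> \<alpha> g x \<in> Aid u g"
  and alpha_add: "g \<in> mor G \<Longrightarrow> x \<in> Aid u (ginv G g) \<Longrightarrow> y \<in> Aid u (ginv G g) \<Longrightarrow>
     \<alpha> g (x + y) = \<alpha> g x + \<alpha> g y"
  and alpha_mult: "g \<in> mor G \<Longrightarrow> x \<in> Aid u (ginv G g) \<Longrightarrow> y \<in> Aid u (ginv G g) \<Longrightarrow>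
     \<alpha> g (x * y) = \<alpha> g x * \<alpha> g y"
  and alpha_image: "g \<in> mor G \<Longrightarrow> \<alpha> g ` Aid u (ginv G g) = Aid u g"
  using alpha_ring_iso unfolding ring_iso_betw_def bij_betw_def by blast+

lemma alpha_zero [simp]: "g \<in> mor G \<Longrightarrow> \<alpha> g 0 = 0"
  using alpha_add[of g 0 0] by simp

lemma alpha_sum_list:
  "g \<in> mor G \<Longrightarrow> (\<And>x. x \<in> set xs \<Longrightarrow> f x \<in> Aid u (ginv G g)) \<Longrightarrow>
   \<alpha> g (\<Sum>x\<leftarrow>xs. f x) = (\<Sum>x\<leftarrow>xs. \<alpha> g (f x))"
  by (induction xs) (auto simp: alpha_add Aid_sum_list)

lemma alpha_ginv_alpha [simp]:
  assumes "g \<in> mor G" "x \<in> Aid u (ginv G g)"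
  shows "\<alpha> (ginv G g) (\<alpha> g x) = x"
proof -
  have "\<alpha> (ginv G g) (\<alpha> g x) = \<alpha> (src G g) x"
    using alpha_cmp[of "ginv G g" g x] assms by simp
  moreover have "x \<in> Aid u (src G g)"
    using Aid_subset_tgt[of "ginv G g"] assms by auto
  ultimately show ?thesis using assms by (simp add: alpha_obj)
qed

lemma alpha_alpha_ginv [simp]: "g \<in> mor G \<Longrightarrow> y \<in> Aid u g \<Longrightarrow> \<alpha> g (\<alpha> (ginv G g) y) = y"
  using alpha_ginv_alpha[of "ginv G g" y] by simp

lemma alpha_u [simp]:
  assumes g: "g \<in> mor G"
  shows "\<alpha> g (u (ginv G g)) = u g"
proof -
  let ?y = "\<alpha> (ginv G g) (u g)"
  have y: "?y \<in> Aid u (ginv G g)" using g alpha_in_Aid[of "ginv G g"] by simp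
  have "u g = \<alpha> g ?y" using g by simp
  also have "\<dots> = \<alpha> g (u (ginv G g) * ?y)" using y g by simp
  also have "\<dots> = \<alpha> g (u (ginv G g))" using g y by (simp add: alpha_mult del: u_mult_Aid)
  finally show ?thesis by (rule sym)
qed

lemma alpha_mult_u:
  assumes "g \<in> mor G" "x \<in> Aid u (ginv G g)"
  shows "\<alpha> g (x * y) = \<alpha> g x * \<alpha> g (y * u (ginv G g))"
proof -
  have "x * y = x * (y * u (ginv G g))"
    using assms by (metis Aid_mult_u ginv_in_mor mult.assoc u_commute)
  then show ?thesis using assms by (simp add: alpha_mult)
qed

lemma alpha_in_Aid_cmp:
  assumes g: "g \<in> mor G" and h: "h \<in> mor G" and gh: "src G g = tgt G h"
    and x: "x \<in> Aid u (ginv G g)" "x \<in> Aid u h"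
  shows "\<alpha> g x \<in> Aid u (cmp G g h)"
  using alpha_cmp[of "ginv G h" "ginv G g" "\<alpha> g x"] assms by (simp add: ginv_cmp)

lemma alpha_u_mult_u:
  assumes g: "g \<in> mor G" and h: "h \<in> mor G" and gh: "src G g = tgt G h"
  shows "\<alpha> g (u (ginv G g) * u h) = u g * u (cmp G g h)"
proof -
  let ?e = "u (ginv G g) * u h" and ?f = "u g * u (cmp G g h)"
  have gh': "cmp G g h \<in> mor G" using assms by simp
  have e: "?e \<in> Aid u (ginv G g)" "?e \<in> Aid u h"
    using g h by (simp_all add: u_commute[of h])
  have f: "?f \<in> Aid u g" "?f \<in> Aid u (cmp G g h)"
    using g gh' by (simp_all add: u_commute[of "cmp G g h"])
  have ae: "\<alpha> g ?e \<in> Aid u g" "\<alpha> g ?e \<in> Aid u (cmp G g h)"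
    using e g h gh alpha_in_Aid_cmp by auto
  let ?z = "\<alpha> (ginv G g) ?f"
  have z: "?z \<in> Aid u (ginv G g)" "?z \<in> Aid u h"
    using alpha_in_Aid[of "ginv G g" ?f] alpha_in_Aid_cmp[of "ginv G g" "cmp G g h" ?f]
      g h gh gh' f cmp_cancel_left[of h g] by simp_all
  have "?f = \<alpha> g (?z * ?e)"
    using z g h by (metis Aid_mult_u alpha_alpha_ginv f(1) ginv_in_mor mult.assoc)
  also have "\<dots> = ?f * \<alpha> g ?e" using g z e f by (simp add: alpha_mult)
  also have "\<dots> = \<alpha> g ?e" using ae g gh' by (metis Aid_mult_u mult.assoc u_commute)
  finally show ?thesis by simp
qed

lemma alpha_cmp_ginv:
  assumes p: "p \<in> mor G" and q: "q \<in> mor G" and pq: "src G p = tgt G q"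
  shows "\<alpha> (cmp G p q) (\<alpha> (ginv G q) (x * u q) * u (ginv G (cmp G p q)))
       = \<alpha> p (x * u (ginv G p)) * u (cmp G p q)"
proof -
  define k where "k = cmp G p q"
  define w where "w = x * u q * u (ginv G p)"
  define c where "c = \<alpha> (ginv G q) (x * u q)"
  have k: "k \<in> mor G" "src G k = src G q" "ginv G k = cmp G (ginv G q) (ginv G p)"
    "cmp G k (ginv G q) = p"
    unfolding k_def using p q pq by (simp_all add: ginv_cmp cmp_cancel_right)
  have w: "w \<in> Aid u q" "w \<in> Aid u (ginv G p)"
    unfolding w_def using p q by (simp_all add: u_commute[of q])
  have c: "c \<in> Aid u (ginv G q)"
    unfolding c_def using alpha_in_Aid[of "ginv G q" "x * u q"] q by simp
  have c_u: "c * u (ginv G k) = \<alpha> (ginv G q) w"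
  proof -
    have "c * u (ginv G k) = c * (u (ginv G q) * u (ginv G k))"
      using c q by (simp flip: mult.assoc)
    also have "\<dots> = c * \<alpha> (ginv G q) (u q * u (ginv G p))"
      using alpha_u_mult_u[of "ginv G q" "ginv G p"] p q pq k(3) by simp
    also have "\<dots> = \<alpha> (ginv G q) (x * u q * (u q * u (ginv G p)))"
      unfolding c_def using p q alpha_mult[of "ginv G q" "x * u q"] by simp
    also have "x * u q * (u q * u (ginv G p)) = w"
      unfolding w_def using q by (simp flip: mult.assoc)
    finally show ?thesis .
  qed
  have "\<alpha> (ginv G q) w \<in> Aid u (ginv G k)"
    unfolding c_u[symmetric] using k(1) by (intro mult_u_in_Aid) simp
  then have "\<alpha> k (\<alpha> (ginv G q) w) = \<alpha> p w"
    using alpha_cmp[of k "ginv G q" w] alpha_in_Aid[of "ginv G q" w] k q w(1) by simp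
  also have "\<dots> = \<alpha> p (x * u (ginv G p)) * \<alpha> p (u (ginv G p) * u q)"
  proof -
    have "w = x * u (ginv G p) * (u (ginv G p) * u q)"
      unfolding w_def using p q by (metis ginv_in_mor mult.assoc u_commute u_idem)
    then show ?thesis using p by (simp add: alpha_mult)
  qed
  also have "\<dots> = \<alpha> p (x * u (ginv G p)) * u k"
    using p q pq alpha_in_Aid[of p "x * u (ginv G p)"]
    by (simp add: alpha_u_mult_u k_def flip: mult.assoc)
  finally show ?thesis using c_u unfolding k_def c_def by simp
qed

lemma alpha_center:
  assumes a: "a \<in> center" and p: "p \<in> mor G"
  shows "\<alpha> p (a * u (ginv G p)) \<in> center"
proof -
  let ?b = "\<alpha> p (a * u (ginv G p))"
  have b: "?b \<in> Aid u p" using p by simp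
  have "?b * x = x * ?b" for x
  proof -
    obtain w where w: "w \<in> Aid u (ginv G p)" "\<alpha> p w = x * u p"
      using alpha_image[OF p] p by (metis imageE mult_u_in_Aid)
    have "a * w = w * a" using a unfolding center_def by blast
    then have aw: "a * u (ginv G p) * w = w * (a * u (ginv G p))"
      using w p by (metis Aid_mult_u ginv_in_mor mult.assoc u_mult_Aid)
    have "?b * \<alpha> p w = \<alpha> p (a * u (ginv G p) * w)" using p w by (simp add: alpha_mult)
    also have "\<dots> = \<alpha> p w * ?b" using p w by (simp add: aw alpha_mult)
    finally have "?b * (x * u p) = x * u p * ?b" using w by simp
    then show ?thesis
      using b p by (metis Aid_mult_u mult.assoc u_commute u_mult_Aid)
  qed
  then show ?thesis unfolding center_def by blast
qed

end

definition skew_sum :: "'i set \<Rightarrow> ('i \<Rightarrow> 'g \<Rightarrow> 'a::comm_monoid_add) \<Rightarrow> 'g \<Rightarrow> 'a" where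
  "skew_sum F f = (\<lambda>k. \<Sum>i\<in>F. f i k)"

lemma skew_sum_empty: "skew_sum {} f = skew_zero"
  by (simp add: skew_sum_def skew_zero_def fun_eq_iff)

lemma skew_sum_insert: "finite F \<Longrightarrow> i \<notin> F \<Longrightarrow> skew_sum (insert i F) f = skew_add (f i) (skew_sum F f)"
  by (simp add: skew_sum_def skew_add_def fun_eq_iff)

lemma skew_add_zero_zero: "skew_add skew_zero skew_zero = skew_zero"
  by (simp add: skew_add_def skew_zero_def)

lemma foldr_skew_add:
  "foldr (\<lambda>(a, b) acc. skew_add (m a b) acc) xs skew_zero = (\<lambda>k. \<Sum>x\<leftarrow>xs. m (fst x) (snd x) k)"
  by (induction xs) (auto simp: skew_add_def skew_zero_def)

context partial_action
begin

definition skew_delta :: "'a \<Rightarrow> 'g \<Rightarrow> 'g \<Rightarrow> 'a" where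
  "skew_delta c g = (\<lambda>k. if k = g then c * u g else 0)"

lemma skew_delta_zero: "skew_delta 0 p = skew_zero"
  by (simp add: skew_delta_def skew_zero_def fun_eq_iff)

lemma skew_delta_add: "skew_delta (c + d) p = skew_add (skew_delta c p) (skew_delta d p)"
  by (simp add: skew_delta_def skew_add_def distrib_right fun_eq_iff)

lemma skew_carrier_iff:
  "f \<in> skew_carrier G u \<longleftrightarrow> (\<forall>g\<in>mor G. f g \<in> Aid u g) \<and> (\<forall>g. g \<notin> mor G \<longrightarrow> f g = 0)"
  unfolding skew_carrier_def by simp

lemma skew_carrier_in_Aid [simp]: "f \<in> skew_carrier G u \<Longrightarrow> g \<in> mor G \<Longrightarrow> f g \<in> Aid u g"
  and skew_carrier_not_mor: "f \<in> skew_carrier G u \<Longrightarrow> g \<notin> mor G \<Longrightarrow> f g = 0"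
  by (simp_all add: skew_carrier_iff)

lemma skew_delta_in_carrier [simp]: "g \<in> mor G \<Longrightarrow> skew_delta c g \<in> skew_carrier G u"
  unfolding skew_carrier_iff skew_delta_def by auto

lemma skew_emb_in_carrier [simp]: "skew_emb G u r \<in> skew_carrier G u"
  unfolding skew_carrier_iff skew_emb_def by auto

lemma skew_add_in_carrier [simp]:
  "f \<in> skew_carrier G u \<Longrightarrow> h \<in> skew_carrier G u \<Longrightarrow> skew_add f h \<in> skew_carrier G u"
  by (simp add: skew_carrier_iff skew_add_def Aid_add)

lemma skew_zero_in_carrier [simp]: "skew_zero \<in> skew_carrier G u"
  by (simp add: skew_carrier_iff skew_zero_def)

end

locale finite_partial_action = partial_action G u \<alpha>
  for G :: "'g groupoid" and u :: "'g \<Rightarrow> 'a::ring_1" and \<alpha> :: "'g \<Rightarrow> 'a \<Rightarrow> 'a" +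
  assumes finite_mor: "finite (mor G)"
begin

lemma finite_obj: "finite (obj G)"
  by (rule finite_subset[OF _ finite_mor]) auto

lemma finite_factorizations [simp]: "finite (factorizations k)"
  by (rule finite_subset[of _ "mor G \<times> mor G"]) (auto simp: factorizations_def finite_mor)

lemma skew_sum_in_carrier:
  "finite F \<Longrightarrow> (\<And>i. i \<in> F \<Longrightarrow> f i \<in> skew_carrier G u) \<Longrightarrow> skew_sum F f \<in> skew_carrier G u"
  by (induction F rule: finite_induct) (simp_all add: skew_sum_empty skew_sum_insert)

lemma skew_sum_delta:
  assumes s: "s \<in> skew_carrier G u"
  shows "skew_sum (mor G) (\<lambda>p. skew_delta (s p) p) = s"
proof
  fix k
  show "skew_sum (mor G) (\<lambda>p. skew_delta (s p) p) k = s k"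
    using s by (cases "k \<in> mor G")
      (simp_all add: skew_sum_def skew_delta_def finite_mor skew_carrier_not_mor)
qed

lemma trace_j_eq:
  assumes e: "e \<in> obj G"
  shows "trace_j G u \<alpha> e c = (\<Sum>g | g \<in> mor G \<and> tgt G g = e. \<alpha> g (c * u (ginv G g)))"
proof -
  have "trace_j G u \<alpha> e c =
      (\<Sum>e'\<in>obj G. \<Sum>g\<in>{g \<in> {g \<in> mor G. tgt G g = e}. src G g = e'}. \<alpha> g (c * u (ginv G g)))"
    unfolding trace_j_def trace_ij_def hom_def by (intro sum.cong) auto
  also have "\<dots> = (\<Sum>g | g \<in> mor G \<and> tgt G g = e. \<alpha> g (c * u (ginv G g)))"
    by (rule sum.group) (auto simp: finite_mor finite_obj)
  finally show ?thesis .
qed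

lemma skew_mult_eq:
  "skew_mult G \<alpha> f t k = (\<Sum>(g, h)\<in>factorizations k. \<alpha> g (\<alpha> (ginv G g) (f g) * t h))"
  unfolding skew_mult_def factorizations_def by simp

lemma skew_mult_term_zero:
  "(g, h) \<in> factorizations k \<Longrightarrow> f g = 0 \<or> t h = 0 \<Longrightarrow> \<alpha> g (\<alpha> (ginv G g) (f g) * t h) = 0"
  unfolding factorizations_def by auto

lemma skew_mult_eq_zero:
  assumes "\<And>g h. (g, h) \<in> factorizations k \<Longrightarrow> f g = 0 \<or> t h = 0"
  shows "skew_mult G \<alpha> f t k = 0"
  unfolding skew_mult_eq using assms skew_mult_term_zero by (intro sum.neutral) fastforce

lemma skew_mult_eq_single:
  assumes gh0: "(g0, h0) \<in> factorizations k"
    and others: "\<And>g h. (g, h) \<in> factorizations k \<Longrightarrow> (g, h) \<noteq> (g0, h0) \<Longrightarrow> f g = 0 \<or> t h = 0"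
  shows "skew_mult G \<alpha> f t k = \<alpha> g0 (\<alpha> (ginv G g0) (f g0) * t h0)"
proof -
  have "(\<Sum>(g, h)\<in>factorizations k - {(g0, h0)}. \<alpha> g (\<alpha> (ginv G g) (f g) * t h)) = 0"
  proof (rule sum.neutral, intro ballI)
    fix x assume x: "x \<in> factorizations k - {(g0, h0)}"
    obtain g h where "x = (g, h)" by fastforce
    with x show "(case x of (g, h) \<Rightarrow> \<alpha> g (\<alpha> (ginv G g) (f g) * t h)) = 0"
      using others[of g h] skew_mult_term_zero[of g h k f t] by auto
  qed
  then show ?thesis unfolding skew_mult_eq using gh0 by (simp add: sum.remove)
qed

lemma skew_mult_closed [simp]:
  assumes f: "f \<in> skew_carrier G u" and t: "t \<in> skew_carrier G u"
  shows "skew_mult G \<alpha> f t \<in> skew_carrier G u"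
proof -
  have "skew_mult G \<alpha> f t k \<in> Aid u k" if k: "k \<in> mor G" for k
    unfolding skew_mult_eq
  proof (rule Aid_sum[OF finite_factorizations k])
    fix x assume "x \<in> factorizations k"
    then obtain g h where x: "x = (g, h)" "g \<in> mor G" "h \<in> mor G" "src G g = tgt G h"
      "cmp G g h = k"
      unfolding factorizations_def by auto
    have "\<alpha> (ginv G g) (f g) \<in> Aid u (ginv G g)"
      using alpha_in_Aid[of "ginv G g"] x f by simp
    then have "\<alpha> g (\<alpha> (ginv G g) (f g) * t h) \<in> Aid u k"
      using alpha_in_Aid_cmp[of g h] x t by simp
    then show "(case x of (g, h) \<Rightarrow> \<alpha> g (\<alpha> (ginv G g) (f g) * t h)) \<in> Aid u k"
      using x by simp
  qed
  then show ?thesis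
    unfolding skew_carrier_iff by (simp add: skew_mult_eq factorizations_not_mor)
qed

lemma skew_mult_at_obj:
  assumes s: "s \<in> skew_carrier G u" and e: "e \<in> obj G"
  shows "skew_mult G \<alpha> s t e =
    (\<Sum>g | g \<in> mor G \<and> tgt G g = e. s g * \<alpha> g (t (ginv G g) * u (ginv G g)))"
proof -
  have "inj_on (\<lambda>g. (g, ginv G g)) {g \<in> mor G. tgt G g = e}" by (auto simp: inj_on_def)
  then have "skew_mult G \<alpha> s t e =
      (\<Sum>g | g \<in> mor G \<and> tgt G g = e. \<alpha> g (\<alpha> (ginv G g) (s g) * t (ginv G g)))"
    unfolding skew_mult_eq factorizations_obj[OF e] by (simp add: sum.reindex)
  also have "\<dots> = (\<Sum>g | g \<in> mor G \<and> tgt G g = e. s g * \<alpha> g (t (ginv G g) * u (ginv G g)))"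
    using s alpha_in_Aid[of "ginv G _"] by (intro sum.cong) (auto simp: alpha_mult_u)
  finally show ?thesis .
qed

lemma skew_mult_delta_right:
  assumes h0: "h0 \<in> mor G"
  shows "skew_mult G \<alpha> f (skew_delta c h0) k =
    (if k \<in> mor G \<and> src G k = src G h0 then
       \<alpha> (cmp G k (ginv G h0))
         (\<alpha> (ginv G (cmp G k (ginv G h0))) (f (cmp G k (ginv G h0))) * (c * u h0))
     else 0)"
proof (cases "k \<in> mor G \<and> src G k = src G h0")
  case True
  have "(cmp G k (ginv G h0), h0) \<in> factorizations k"
    unfolding factorizations_def using True h0 cmp_src[of k] by (simp add: cmp_assoc)
  then show ?thesis
    using True
    by (subst skew_mult_eq_single) (auto simp: skew_delta_def dest: factorizations_left_eq)
next
  case False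
  then show ?thesis
    by (auto intro!: skew_mult_eq_zero simp: skew_delta_def factorizations_def split: if_splits)
qed

lemma skew_mult_delta_left:
  assumes g0: "g0 \<in> mor G"
  shows "skew_mult G \<alpha> (skew_delta c g0) t k =
    (if k \<in> mor G \<and> tgt G k = tgt G g0 then
       \<alpha> g0 (\<alpha> (ginv G g0) (c * u g0) * t (cmp G (ginv G g0) k))
     else 0)"
proof (cases "k \<in> mor G \<and> tgt G k = tgt G g0")
  case True
  have "(g0, cmp G (ginv G g0) k) \<in> factorizations k"
    unfolding factorizations_def using True g0 cmp_tgt[of k] by (simp add: cmp_assoc[symmetric])
  then show ?thesis
    using True
    by (subst skew_mult_eq_single) (auto simp: skew_delta_def dest: factorizations_right_eq)
next
  case False
  then show ?thesis
    by (auto intro!: skew_mult_eq_zero simp: skew_delta_def factorizations_def split: if_splits)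
qed

lemma skew_mult_emb_right:
  assumes f: "f \<in> skew_carrier G u"
  shows "skew_mult G \<alpha> f (skew_emb G u r) k = f k * \<alpha> k (r * u (ginv G k))"
proof (cases "k \<in> mor G")
  case k: True
  have "skew_mult G \<alpha> f (skew_emb G u r) k = \<alpha> k (\<alpha> (ginv G k) (f k) * (r * u (src G k)))"
  proof (subst skew_mult_eq_single)
    show "(k, src G k) \<in> factorizations k"
      unfolding factorizations_def using k by simp
    fix g h assume gh: "(g, h) \<in> factorizations k" "(g, h) \<noteq> (k, src G k)"
    have "h \<notin> obj G"
    proof
      assume h: "h \<in> obj G"
      moreover have "g \<in> mor G" "src G g = h" "cmp G g h = k"
        using gh(1) h unfolding factorizations_def by auto
      ultimately have "g = k" "h = src G k" using cmp_src[of g] by auto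
      then show False using gh(2) by simp
    qed
    then show "f g = 0 \<or> skew_emb G u r h = 0" by (simp add: skew_emb_def)
  qed (use k in \<open>simp add: skew_emb_def\<close>)
  also have "\<dots> = f k * \<alpha> k (r * u (src G k) * u (ginv G k))"
    using k f alpha_in_Aid[of "ginv G k" "f k"] by (simp add: alpha_mult_u)
  also have "r * u (src G k) * u (ginv G k) = r * u (ginv G k)"
    using k u_mult_u_tgt[of "ginv G k"] by (simp add: mult.assoc u_commute[of "ginv G k"])
  finally show ?thesis .
qed (use f in \<open>simp add: skew_mult_eq factorizations_not_mor skew_carrier_not_mor\<close>)

lemma skew_mult_emb_left:
  assumes t: "t \<in> skew_carrier G u"
  shows "skew_mult G \<alpha> (skew_emb G u r) t k = r * t k"
proof (cases "k \<in> mor G")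
  case k: True
  have "skew_mult G \<alpha> (skew_emb G u r) t k = \<alpha> (tgt G k) (\<alpha> (tgt G k) (r * u (tgt G k)) * t k)"
  proof (subst skew_mult_eq_single)
    show "(tgt G k, k) \<in> factorizations k"
      unfolding factorizations_def using k by simp
    fix g h assume gh: "(g, h) \<in> factorizations k" "(g, h) \<noteq> (tgt G k, k)"
    have "g \<notin> obj G"
    proof
      assume g: "g \<in> obj G"
      moreover have "h \<in> mor G" "tgt G h = g" "cmp G g h = k"
        using gh(1) g unfolding factorizations_def by auto
      ultimately have "h = k" "g = tgt G k" using cmp_tgt[of h] by auto
      then show False using gh(2) by simp
    qed
    then show "skew_emb G u r g = 0 \<or> t h = 0" by (simp add: skew_emb_def)
  qed (use k in \<open>simp add: skew_emb_def\<close>)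
  also have "\<dots> = r * u (tgt G k) * t k"
    using k t by (simp add: alpha_obj)
  also have "\<dots> = r * t k"
  proof -
    have "t k \<in> Aid u (tgt G k)" using k t Aid_subset_tgt[of k] by auto
    then show ?thesis using k by (simp add: mult.assoc)
  qed
  finally show ?thesis .
qed (use t in \<open>simp add: skew_mult_eq factorizations_not_mor skew_carrier_not_mor\<close>)

lemma skew_mult_delta_emb:
  assumes "p \<in> mor G"
  shows "skew_mult G \<alpha> (skew_delta c p) (skew_emb G u r) =
    skew_delta (c * \<alpha> p (r * u (ginv G p))) p"
  unfolding fun_eq_iff skew_mult_emb_right[OF skew_delta_in_carrier[OF assms]]
  using assms by (simp add: skew_delta_def mult.assoc)

lemma skew_mult_emb_delta:
  assumes "q \<in> mor G"
  shows "skew_mult G \<alpha> (skew_emb G u r) (skew_delta c q) = skew_delta (r * c) q"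
  unfolding fun_eq_iff skew_mult_emb_left[OF skew_delta_in_carrier[OF assms]]
  by (simp add: skew_delta_def mult.assoc)

lemma skew_mult_delta_delta_ginv:
  assumes g: "g \<in> mor G" and c: "c \<in> Aid u g"
  shows "skew_mult G \<alpha> (skew_delta c g) (skew_delta 1 (ginv G g)) k =
    (if k = tgt G g then c else 0)"
proof -
  have "skew_mult G \<alpha> (skew_delta c g) (skew_delta 1 (ginv G g)) k =
    (if k \<in> mor G \<and> src G k = tgt G g then
       \<alpha> (cmp G k g) (\<alpha> (ginv G (cmp G k g)) (skew_delta c g (cmp G k g)) * u (ginv G g))
     else 0)"
    using skew_mult_delta_right[of "ginv G g" "skew_delta c g" 1 k] g by simp
  moreover have "cmp G k g = g \<longleftrightarrow> k = tgt G g" if "k \<in> mor G" "src G k = tgt G g"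
    using that g cmp_cancel_right[of k g] by auto
  ultimately show ?thesis using g c by (auto simp: skew_delta_def)
qed

end

section \<open>Tensor products over a subring\<close>

definition tens_equiv ::
  "'s set \<Rightarrow> ('s \<Rightarrow> 's \<Rightarrow> 's) \<Rightarrow> ('s \<Rightarrow> 's \<Rightarrow> 's) \<Rightarrow> 's set \<Rightarrow> ('s \<times> 's \<Rightarrow> int) \<Rightarrow> ('s \<times> 's \<Rightarrow> int) \<Rightarrow> bool"
  where "tens_equiv S add mul R X Y \<longleftrightarrow> (\<lambda>q. X q - Y q) \<in> tens_zero S add mul R"

lemma tens_eq_iff_tens_equiv:
  "tens_eq S add mul R xs ys \<longleftrightarrow> tens_equiv S add mul R (formal xs) (formal ys)"
  unfolding tens_eq_def tens_equiv_def ..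

lemma tens_equiv_refl: "tens_equiv S add mul R X X"
  unfolding tens_equiv_def using tens_zero.tz_zero by simp

lemma tens_equiv_sym: "tens_equiv S add mul R X Y \<Longrightarrow> tens_equiv S add mul R Y X"
  unfolding tens_equiv_def using tens_zero.tz_neg by fastforce

lemma tens_equiv_trans [trans]:
  assumes "tens_equiv S add mul R X Y" "tens_equiv S add mul R Y Z"
  shows "tens_equiv S add mul R X Z"
proof -
  have "(\<lambda>q. (X q - Y q) + (Y q - Z q)) \<in> tens_zero S add mul R"
    using assms unfolding tens_equiv_def by (rule tens_zero.tz_plus)
  then show ?thesis unfolding tens_equiv_def by simp
qed

lemma tens_equiv_add:
  assumes "tens_equiv S add mul R X Y" "tens_equiv S add mul R X' Y'"
  shows "tens_equiv S add mul R (\<lambda>q. X q + X' q) (\<lambda>q. Y q + Y' q)"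
proof -
  have "(\<lambda>q. (X q - Y q) + (X' q - Y' q)) \<in> tens_zero S add mul R"
    using assms unfolding tens_equiv_def by (rule tens_zero.tz_plus)
  then show ?thesis unfolding tens_equiv_def by (simp add: algebra_simps)
qed

lemma tens_equiv_sum:
  "finite I \<Longrightarrow> (\<And>i. i \<in> I \<Longrightarrow> tens_equiv S add mul R (X i) (Y i)) \<Longrightarrow>
   tens_equiv S add mul R (\<lambda>q. \<Sum>i\<in>I. X i q) (\<lambda>q. \<Sum>i\<in>I. Y i q)"
  by (induction I rule: finite_induct) (simp_all add: tens_equiv_refl tens_equiv_add)

lemma tens_equiv_ind_add_left:
  "a \<in> S \<Longrightarrow> a' \<in> S \<Longrightarrow> b \<in> S \<Longrightarrow>
   tens_equiv S add mul R (ind (add a a', b)) (\<lambda>q. ind (a, b) q + ind (a', b) q)"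
  unfolding tens_equiv_def using tens_zero.tz_left by (simp add: diff_diff_eq)

lemma tens_equiv_ind_add_right:
  "a \<in> S \<Longrightarrow> b \<in> S \<Longrightarrow> b' \<in> S \<Longrightarrow>
   tens_equiv S add mul R (ind (a, add b b')) (\<lambda>q. ind (a, b) q + ind (a, b') q)"
  unfolding tens_equiv_def using tens_zero.tz_right by (simp add: diff_diff_eq)

lemma tens_equiv_ind_balanced:
  "a \<in> S \<Longrightarrow> r \<in> R \<Longrightarrow> b \<in> S \<Longrightarrow> tens_equiv S add mul R (ind (mul a r, b)) (ind (a, mul r b))"
  unfolding tens_equiv_def by (rule tens_zero.tz_bal)

lemma tens_equiv_ind_zero_left:
  assumes "z \<in> S" "add z z = z" "b \<in> S"
  shows "tens_equiv S add mul R (ind (z, b)) (\<lambda>q. 0)"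
proof -
  have "(\<lambda>q. - ind (z, b) q) \<in> tens_zero S add mul R"
    using tens_equiv_ind_add_left[of z S z b add mul R] assms unfolding tens_equiv_def by simp
  then have "(\<lambda>q. - (- ind (z, b) q)) \<in> tens_zero S add mul R" by (rule tens_zero.tz_neg)
  then show ?thesis unfolding tens_equiv_def by simp
qed

lemma tens_equiv_ind_zero_right:
  assumes "a \<in> S" "z \<in> S" "add z z = z"
  shows "tens_equiv S add mul R (ind (a, z)) (\<lambda>q. 0)"
proof -
  have "(\<lambda>q. - ind (a, z) q) \<in> tens_zero S add mul R"
    using tens_equiv_ind_add_right[of a S z z add mul R] assms unfolding tens_equiv_def by simp
  then have "(\<lambda>q. - (- ind (a, z) q)) \<in> tens_zero S add mul R" by (rule tens_zero.tz_neg)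
  then show ?thesis unfolding tens_equiv_def by simp
qed

lemma formal_Cons: "formal (x # xs) = (\<lambda>q. ind x q + formal xs q)"
  by (simp add: formal_def ind_def fun_eq_iff)

definition support :: "('s \<Rightarrow> int) \<Rightarrow> 's set" where
  "support z = {q. z q \<noteq> 0}"

definition lin_ext :: "('s \<Rightarrow> 'a::ring_1) \<Rightarrow> ('s \<Rightarrow> int) \<Rightarrow> 'a" where
  "lin_ext P z = (\<Sum>q\<in>support z. of_int (z q) * P q)"

lemma lin_ext_superset:
  assumes "finite U" "support z \<subseteq> U"
  shows "lin_ext P z = (\<Sum>q\<in>U. of_int (z q) * P q)"
  unfolding lin_ext_def using assms by (intro sum.mono_neutral_left) (auto simp: support_def)

lemma support_ind: "support (ind p) = {p}"
  by (auto simp: support_def ind_def)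

lemma lin_ext_ind: "lin_ext P (ind p) = P p"
  unfolding lin_ext_def support_ind by (simp add: ind_def)

lemma lin_ext_add:
  assumes "finite (support x)" "finite (support y)"
  shows "finite (support (\<lambda>q. x q + y q)) \<and> lin_ext P (\<lambda>q. x q + y q) = lin_ext P x + lin_ext P y"
proof -
  let ?U = "support x \<union> support y"
  have U: "finite ?U" "support (\<lambda>q. x q + y q) \<subseteq> ?U" using assms by (auto simp: support_def)
  then have "lin_ext P (\<lambda>q. x q + y q) = (\<Sum>q\<in>?U. of_int (x q) * P q) + (\<Sum>q\<in>?U. of_int (y q) * P q)"
    by (simp add: lin_ext_superset[OF U] distrib_right sum.distrib)
  also have "\<dots> = lin_ext P x + lin_ext P y"
    using U(1) lin_ext_superset[of ?U x P] lin_ext_superset[of ?U y P] by simp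
  finally show ?thesis using U finite_subset by blast
qed

lemma lin_ext_uminus:
  "support (\<lambda>q. - x q) = support x \<and> lin_ext P (\<lambda>q. - x q) = - lin_ext P x"
  by (simp add: lin_ext_def support_def sum_negf)

lemma lin_ext_diff:
  assumes "finite (support x)" "finite (support y)"
  shows "finite (support (\<lambda>q. x q - y q)) \<and> lin_ext P (\<lambda>q. x q - y q) = lin_ext P x - lin_ext P y"
  using lin_ext_add[of x "\<lambda>q. - y q" P] lin_ext_uminus[of y P] assms by simp

lemma lin_ext_formal: "finite (support (formal xs)) \<and> lin_ext P (formal xs) = (\<Sum>x\<leftarrow>xs. P x)"
proof (induction xs)
  case Nil
  then show ?case by (simp add: formal_def lin_ext_def support_def)
next
  case (Cons x xs)
  then show ?case
    using lin_ext_add[of "ind x" "formal xs" P] by (simp add: formal_Cons support_ind lin_ext_ind)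
qed

context
  fixes S R :: "'s set" and add mul :: "'s \<Rightarrow> 's \<Rightarrow> 's" and P :: "'s \<times> 's \<Rightarrow> 'a::ring_1"
  assumes P_add_left: "\<And>a a' b. a \<in> S \<Longrightarrow> a' \<in> S \<Longrightarrow> b \<in> S \<Longrightarrow> P (add a a', b) = P (a, b) + P (a', b)"
    and P_add_right: "\<And>a b b'. a \<in> S \<Longrightarrow> b \<in> S \<Longrightarrow> b' \<in> S \<Longrightarrow> P (a, add b b') = P (a, b) + P (a, b')"
    and P_balanced: "\<And>a r b. a \<in> S \<Longrightarrow> r \<in> R \<Longrightarrow> b \<in> S \<Longrightarrow> P (mul a r, b) = P (a, mul r b)"
begin

lemma lin_ext_tens_zero:
  "z \<in> tens_zero S add mul R \<Longrightarrow> finite (support z) \<and> lin_ext P z = 0"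
proof (induction rule: tens_zero.induct)
  case tz_zero
  then show ?case by (simp add: support_def lin_ext_def)
next
  case (tz_left a a' b)
  then show ?case
    using lin_ext_diff[of "\<lambda>q. ind (add a a', b) q - ind (a, b) q" "ind (a', b)" P]
      lin_ext_diff[of "ind (add a a', b)" "ind (a, b)" P]
    by (simp add: support_ind lin_ext_ind P_add_left)
next
  case (tz_right a b b')
  then show ?case
    using lin_ext_diff[of "\<lambda>q. ind (a, add b b') q - ind (a, b) q" "ind (a, b')" P]
      lin_ext_diff[of "ind (a, add b b')" "ind (a, b)" P]
    by (simp add: support_ind lin_ext_ind P_add_right)
next
  case (tz_bal a r b)
  then show ?case
    using lin_ext_diff[of "ind (mul a r, b)" "ind (a, mul r b)" P]
    by (simp add: support_ind lin_ext_ind P_balanced)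
next
  case (tz_plus x y)
  then show ?case using lin_ext_add[of x y P] by simp
next
  case (tz_neg x)
  then show ?case using lin_ext_uminus[of x P] by simp
qed

lemma sum_list_eq_if_tens_eq:
  assumes "tens_eq S add mul R xs ys"
  shows "(\<Sum>x\<leftarrow>xs. P x) = (\<Sum>x\<leftarrow>ys. P x)"
  using lin_ext_tens_zero[of "\<lambda>q. formal xs q - formal ys q"] assms
    lin_ext_diff[of "formal xs" "formal ys" P] lin_ext_formal[of xs P] lin_ext_formal[of ys P]
  unfolding tens_eq_def by simp

end

section \<open>Coordinates on the tensor square of the skew ring\<close>

context finite_partial_action
begin

abbreviation skew_tens_equiv ::
  "(('g \<Rightarrow> 'a) \<times> ('g \<Rightarrow> 'a) \<Rightarrow> int) \<Rightarrow> (('g \<Rightarrow> 'a) \<times> ('g \<Rightarrow> 'a) \<Rightarrow> int) \<Rightarrow> bool"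
  where "skew_tens_equiv \<equiv>
    tens_equiv (skew_carrier G u) skew_add (skew_mult G \<alpha>) (range (skew_emb G u))"

abbreviation skew_tens_eq :: "(('g \<Rightarrow> 'a) \<times> ('g \<Rightarrow> 'a)) list \<Rightarrow> (('g \<Rightarrow> 'a) \<times> ('g \<Rightarrow> 'a)) list \<Rightarrow> bool"
  where "skew_tens_eq \<equiv> tens_eq (skew_carrier G u) skew_add (skew_mult G \<alpha>) (range (skew_emb G u))"

(* The coefficient of \<delta>_p \<otimes> 1_q \<delta>_q in x \<otimes> y, cf. tens_equiv_ind_delta. *)
definition tensor_coeff :: "'g \<Rightarrow> 'g \<Rightarrow> ('g \<Rightarrow> 'a) \<times> ('g \<Rightarrow> 'a) \<Rightarrow> 'a" where
  "tensor_coeff p q x = fst x p * \<alpha> p (snd x q * u (ginv G p))"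

definition coeff_sum :: "(('g \<Rightarrow> 'a) \<times> ('g \<Rightarrow> 'a)) list \<Rightarrow> 'g \<Rightarrow> 'g \<Rightarrow> 'a" where
  "coeff_sum xs p q = (\<Sum>x\<leftarrow>xs. tensor_coeff p q x)"

lemma tensor_coeff_balanced:
  assumes a: "a \<in> skew_carrier G u" and b: "b \<in> skew_carrier G u"
  shows "tensor_coeff p q (skew_mult G \<alpha> a (skew_emb G u r), b) =
    tensor_coeff p q (a, skew_mult G \<alpha> (skew_emb G u r) b)"
proof (cases "p \<in> mor G")
  case p: True
  have "r * u (ginv G p) * (b q * u (ginv G p)) = r * b q * u (ginv G p)"
    using p by (metis ginv_in_mor mult.assoc u_commute u_idem)
  then show ?thesis
    using p a b by (simp add: tensor_coeff_def skew_mult_emb_right skew_mult_emb_left mult.assoc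
        flip: alpha_mult)
qed (use a in \<open>simp add: tensor_coeff_def skew_mult_emb_right skew_carrier_not_mor\<close>)

lemma coeff_sum_eq_if_tens_eq:
  assumes "skew_tens_eq xs ys"
  shows "coeff_sum xs p q = coeff_sum ys p q"
  unfolding coeff_sum_def
proof (rule sum_list_eq_if_tens_eq[OF _ _ _ assms])
  fix a a' b assume "a \<in> skew_carrier G u" "a' \<in> skew_carrier G u"
  then show "tensor_coeff p q (skew_add a a', b) =
      tensor_coeff p q (a, b) + tensor_coeff p q (a', b)"
    by (simp add: tensor_coeff_def skew_add_def distrib_right)
next
  fix a b b' assume "a \<in> skew_carrier G u" "b \<in> skew_carrier G u" "b' \<in> skew_carrier G u"
  then show "tensor_coeff p q (a, skew_add b b') =
      tensor_coeff p q (a, b) + tensor_coeff p q (a, b')"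
    by (cases "p \<in> mor G")
      (simp_all add: tensor_coeff_def skew_add_def distrib_right distrib_left alpha_add
        skew_carrier_not_mor)
next
  fix a r b assume "a \<in> skew_carrier G u" "r \<in> range (skew_emb G u)" "b \<in> skew_carrier G u"
  then show "tensor_coeff p q (skew_mult G \<alpha> a r, b) = tensor_coeff p q (a, skew_mult G \<alpha> r b)"
    using tensor_coeff_balanced by blast
qed

lemma tens_equiv_ind_sum_left:
  assumes "finite F" "\<And>i. i \<in> F \<Longrightarrow> f i \<in> skew_carrier G u" "b \<in> skew_carrier G u"
  shows "skew_tens_equiv (ind (skew_sum F f, b)) (\<lambda>q. \<Sum>i\<in>F. ind (f i, b) q)"
  using assms
proof (induction F rule: finite_induct)
  case empty
  then show ?case
    using tens_equiv_ind_zero_left[where add = skew_add, OF skew_zero_in_carrier skew_add_zero_zero]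
    by (simp add: skew_sum_empty)
next
  case (insert i F)
  have "skew_tens_equiv (ind (skew_sum (insert i F) f, b))
      (\<lambda>q. ind (f i, b) q + ind (skew_sum F f, b) q)"
    using insert by (simp add: skew_sum_insert tens_equiv_ind_add_left skew_sum_in_carrier)
  also have "skew_tens_equiv \<dots> (\<lambda>q. ind (f i, b) q + (\<Sum>i\<in>F. ind (f i, b) q))"
    using insert by (simp add: tens_equiv_add tens_equiv_refl)
  finally show ?case using insert by simp
qed

lemma tens_equiv_ind_sum_right:
  assumes "finite F" "\<And>i. i \<in> F \<Longrightarrow> f i \<in> skew_carrier G u" "a \<in> skew_carrier G u"
  shows "skew_tens_equiv (ind (a, skew_sum F f)) (\<lambda>q. \<Sum>i\<in>F. ind (a, f i) q)"
  using assms
proof (induction F rule: finite_induct)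
  case empty
  then show ?case
    using tens_equiv_ind_zero_right[where add = skew_add, OF _ skew_zero_in_carrier
        skew_add_zero_zero]
    by (simp add: skew_sum_empty)
next
  case (insert i F)
  have "skew_tens_equiv (ind (a, skew_sum (insert i F) f))
      (\<lambda>q. ind (a, f i) q + ind (a, skew_sum F f) q)"
    using insert by (simp add: skew_sum_insert tens_equiv_ind_add_right skew_sum_in_carrier)
  also have "skew_tens_equiv \<dots> (\<lambda>q. ind (a, f i) q + (\<Sum>i\<in>F. ind (a, f i) q))"
    using insert by (simp add: tens_equiv_add tens_equiv_refl)
  finally show ?case using insert by simp
qed

lemma tens_equiv_ind_delta:
  assumes p: "p \<in> mor G" and q: "q \<in> mor G"
  shows "skew_tens_equiv (ind (skew_delta c p, skew_delta d q))
           (ind (skew_delta (tensor_coeff p q (skew_delta c p, skew_delta d q)) p, skew_delta 1 q))"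
proof -
  have "skew_tens_equiv
          (ind (skew_mult G \<alpha> (skew_delta c p) (skew_emb G u (d * u q)), skew_delta 1 q))
          (ind (skew_delta c p, skew_mult G \<alpha> (skew_emb G u (d * u q)) (skew_delta 1 q)))"
    using p q by (intro tens_equiv_ind_balanced) simp_all
  moreover have "skew_mult G \<alpha> (skew_emb G u (d * u q)) (skew_delta 1 q) = skew_delta d q"
    unfolding skew_mult_emb_delta[OF q] using q by (simp add: skew_delta_def mult.assoc fun_eq_iff)
  moreover have "skew_mult G \<alpha> (skew_delta c p) (skew_emb G u (d * u q))
      = skew_delta (tensor_coeff p q (skew_delta c p, skew_delta d q)) p"
    unfolding skew_mult_delta_emb[OF p] using p
    by (simp add: tensor_coeff_def skew_delta_def mult.assoc fun_eq_iff)
  ultimately show ?thesis by (simp add: tens_equiv_sym)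
qed

definition normal_form :: "(('g \<Rightarrow> 'a) \<times> ('g \<Rightarrow> 'a)) list \<Rightarrow> ('g \<Rightarrow> 'a) \<times> ('g \<Rightarrow> 'a) \<Rightarrow> int" where
  "normal_form xs =
    (\<lambda>x. \<Sum>p\<in>mor G. \<Sum>q\<in>mor G. ind (skew_delta (coeff_sum xs p q) p, skew_delta 1 q) x)"

lemma tens_equiv_ind_normal_form:
  assumes s: "s \<in> skew_carrier G u" and t: "t \<in> skew_carrier G u"
  shows "skew_tens_equiv (ind (s, t)) (normal_form [(s, t)])"
proof -
  have "skew_tens_equiv (ind (s, t)) (\<lambda>x. \<Sum>p\<in>mor G. ind (skew_delta (s p) p, t) x)"
    using tens_equiv_ind_sum_left[of "mor G" "\<lambda>p. skew_delta (s p) p" t] s t finite_mor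
    by (simp add: skew_sum_delta)
  also have "skew_tens_equiv \<dots>
      (\<lambda>x. \<Sum>p\<in>mor G. \<Sum>q\<in>mor G. ind (skew_delta (s p) p, skew_delta (t q) q) x)"
    using tens_equiv_ind_sum_right[of "mor G" "\<lambda>q. skew_delta (t q) q"] t finite_mor
    by (intro tens_equiv_sum) (simp_all add: skew_sum_delta)
  also have "skew_tens_equiv \<dots> (normal_form [(s, t)])"
    unfolding normal_form_def
  proof (intro tens_equiv_sum finite_mor)
    fix p q assume p: "p \<in> mor G" and q: "q \<in> mor G"
    have "coeff_sum [(s, t)] p q = tensor_coeff p q (skew_delta (s p) p, skew_delta (t q) q)"
      using p q s t by (simp add: coeff_sum_def tensor_coeff_def skew_delta_def)
    then show "skew_tens_equiv (ind (skew_delta (s p) p, skew_delta (t q) q))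
        (ind (skew_delta (coeff_sum [(s, t)] p q) p, skew_delta 1 q))"
      using tens_equiv_ind_delta[OF p q] by simp
  qed
  finally show ?thesis .
qed

lemma tens_equiv_normal_form_Cons:
  "skew_tens_equiv (normal_form (x # xs)) (\<lambda>y. normal_form [x] y + normal_form xs y)"
proof -
  have "skew_tens_equiv (normal_form (x # xs))
      (\<lambda>y. \<Sum>p\<in>mor G. \<Sum>q\<in>mor G. ind (skew_delta (coeff_sum [x] p q) p, skew_delta 1 q) y
                                 + ind (skew_delta (coeff_sum xs p q) p, skew_delta 1 q) y)"
    unfolding normal_form_def using finite_mor
    by (intro tens_equiv_sum) (simp_all add: coeff_sum_def skew_delta_add tens_equiv_ind_add_left)
  then show ?thesis by (simp add: normal_form_def sum.distrib)
qed

lemma tens_equiv_formal_normal_form: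
  "set xs \<subseteq> skew_carrier G u \<times> skew_carrier G u \<Longrightarrow> skew_tens_equiv (formal xs) (normal_form xs)"
proof (induction xs)
  case Nil
  have "skew_tens_equiv (normal_form []) (\<lambda>y. \<Sum>p\<in>mor G. \<Sum>q\<in>mor G. 0)"
    unfolding normal_form_def coeff_sum_def using finite_mor
    by (intro tens_equiv_sum tens_equiv_ind_zero_left)
      (simp_all add: skew_delta_zero skew_add_zero_zero)
  then show ?case by (simp add: formal_def tens_equiv_sym)
next
  case (Cons x xs)
  obtain s t where x: "x = (s, t)" "s \<in> skew_carrier G u" "t \<in> skew_carrier G u"
    using Cons.prems by (cases x) auto
  have "skew_tens_equiv (formal (x # xs)) (\<lambda>y. normal_form [x] y + normal_form xs y)"
    unfolding formal_Cons using Cons x by (simp add: tens_equiv_add tens_equiv_ind_normal_form)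
  also have "skew_tens_equiv \<dots> (normal_form (x # xs))"
    by (rule tens_equiv_sym[OF tens_equiv_normal_form_Cons])
  finally show ?case .
qed

lemma tens_eq_iff_coeff_sum_eq:
  assumes "set xs \<subseteq> skew_carrier G u \<times> skew_carrier G u"
    and "set ys \<subseteq> skew_carrier G u \<times> skew_carrier G u"
  shows "skew_tens_eq xs ys \<longleftrightarrow> (\<forall>p\<in>mor G. \<forall>q\<in>mor G. coeff_sum xs p q = coeff_sum ys p q)"
proof
  assume "\<forall>p\<in>mor G. \<forall>q\<in>mor G. coeff_sum xs p q = coeff_sum ys p q"
  then have "normal_form xs = normal_form ys"
    unfolding normal_form_def by (intro ext sum.cong) auto
  then have "skew_tens_equiv (formal xs) (normal_form ys)"
    using tens_equiv_formal_normal_form[OF assms(1)] by simp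
  also have "skew_tens_equiv \<dots> (formal ys)"
    by (rule tens_equiv_sym[OF tens_equiv_formal_normal_form[OF assms(2)]])
  finally show "skew_tens_eq xs ys" by (simp add: tens_eq_iff_tens_equiv)
qed (simp add: coeff_sum_eq_if_tens_eq)

end

section \<open>A separability element yields a central element of trace one\<close>

lemma sum_list_sum_commute: "(\<Sum>x\<leftarrow>xs. \<Sum>g\<in>H. f x g) = (\<Sum>g\<in>H. \<Sum>x\<leftarrow>xs. (f x g :: 'a::comm_monoid_add))"
  by (induction xs) (simp_all add: sum.distrib)

context finite_partial_action
begin

lemma tensor_coeff_obj:
  "e \<in> obj G \<Longrightarrow> b \<in> skew_carrier G u \<Longrightarrow> tensor_coeff e e (a, b) = a e * b e"
  by (simp add: tensor_coeff_def alpha_obj)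

lemma tensor_coeff_emb_left_obj:
  "e \<in> obj G \<Longrightarrow> a \<in> skew_carrier G u \<Longrightarrow> b \<in> skew_carrier G u \<Longrightarrow>
   tensor_coeff e e (skew_mult G \<alpha> (skew_emb G u r) a, b) = r * tensor_coeff e e (a, b)"
  by (simp add: tensor_coeff_obj skew_mult_emb_left mult.assoc)

lemma tensor_coeff_emb_right_obj:
  assumes e: "e \<in> obj G" and b: "b \<in> skew_carrier G u"
  shows "tensor_coeff e e (a, skew_mult G \<alpha> b (skew_emb G u r)) = tensor_coeff e e (a, b) * r"
proof -
  have "b e * (r * u e) = b e * r"
    using e b by (metis Aid_mult_u mult.assoc obj_in_mor skew_carrier_in_Aid u_commute)
  then show ?thesis
    using e b by (simp add: tensor_coeff_obj skew_mult_emb_right alpha_obj mult.assoc)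
qed

lemma tensor_coeff_delta_left_src:
  assumes g: "g \<in> mor G" and a: "a \<in> skew_carrier G u" and b: "b \<in> skew_carrier G u"
  shows "tensor_coeff g (src G g) (skew_mult G \<alpha> (skew_delta 1 g) a, b)
       = \<alpha> g (tensor_coeff (src G g) (src G g) (a, b) * u (ginv G g))"
proof -
  let ?e = "src G g" and ?v = "u (ginv G g)"
  have "\<alpha> (ginv G g) (u g) = ?v" using g alpha_u[of "ginv G g"] by simp
  then have "skew_mult G \<alpha> (skew_delta 1 g) a g = \<alpha> g (?v * a ?e)"
    using g by (simp add: skew_mult_delta_left)
  then have "tensor_coeff g ?e (skew_mult G \<alpha> (skew_delta 1 g) a, b) =
      \<alpha> g (?v * a ?e * (b ?e * ?v))"
    using g by (simp add: tensor_coeff_def alpha_mult)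
  also have "?v * a ?e * (b ?e * ?v) = a ?e * (?v * b ?e) * ?v"
    using g by (simp add: u_commute[of "ginv G g" "a ?e"] mult.assoc)
  also have "\<dots> = a ?e * b ?e * ?v"
    using g by (simp add: u_commute[of "ginv G g" "b ?e"] mult.assoc)
  finally show ?thesis using g b by (simp add: tensor_coeff_obj)
qed

lemma tensor_coeff_delta_right_src:
  assumes g: "g \<in> mor G" and b: "b \<in> skew_carrier G u"
  shows "tensor_coeff g (src G g) (a, skew_mult G \<alpha> b (skew_delta 1 g)) =
    tensor_coeff g (ginv G g) (a, b)"
proof -
  have "skew_mult G \<alpha> b (skew_delta 1 g) (src G g) = b (ginv G g)"
    using g b cmp_tgt[of "ginv G g"] by (simp add: skew_mult_delta_right)
  then show ?thesis by (simp add: tensor_coeff_def)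
qed

context
  fixes xs :: "(('g \<Rightarrow> 'a) \<times> ('g \<Rightarrow> 'a)) list"
  assumes xs_carrier: "set xs \<subseteq> skew_carrier G u \<times> skew_carrier G u"
    and xs_commutes: "\<forall>s\<in>skew_carrier G u.
      skew_tens_eq (map (\<lambda>(a, b). (skew_mult G \<alpha> s a, b)) xs)
        (map (\<lambda>(a, b). (a, skew_mult G \<alpha> b s)) xs)"
begin

lemma coeff_sum_commutes:
  assumes "s \<in> skew_carrier G u"
  shows "(\<Sum>x\<leftarrow>xs. tensor_coeff p q (skew_mult G \<alpha> s (fst x), snd x))
       = (\<Sum>x\<leftarrow>xs. tensor_coeff p q (fst x, skew_mult G \<alpha> (snd x) s))"
  using coeff_sum_eq_if_tens_eq[OF xs_commutes[rule_format, OF assms], of p q]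
  by (simp add: coeff_sum_def o_def case_prod_beta)

lemma coeff_sum_obj_mult_u:
  assumes e: "e \<in> obj G"
  shows "coeff_sum xs e e * u e = coeff_sum xs e e"
  unfolding coeff_sum_def sum_list_mult_const[symmetric]
proof (intro arg_cong[where f = sum_list] map_cong refl)
  fix x assume "x \<in> set xs"
  then have "snd x \<in> skew_carrier G u" using xs_carrier by auto
  then show "tensor_coeff e e x * u e = tensor_coeff e e x"
    using e tensor_coeff_obj[of e "snd x" "fst x"] by (simp add: mult.assoc)
qed

lemma coeff_sum_obj_commute:
  assumes e: "e \<in> obj G"
  shows "r * coeff_sum xs e e = coeff_sum xs e e * r"
proof -
  have "r * coeff_sum xs e e =
      (\<Sum>x\<leftarrow>xs. tensor_coeff e e (skew_mult G \<alpha> (skew_emb G u r) (fst x), snd x))"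
    unfolding coeff_sum_def sum_list_const_mult[symmetric]
  proof (intro arg_cong[where f = sum_list] map_cong refl)
    fix x assume "x \<in> set xs"
    then have "fst x \<in> skew_carrier G u" "snd x \<in> skew_carrier G u" using xs_carrier by auto
    then show "r * tensor_coeff e e x =
        tensor_coeff e e (skew_mult G \<alpha> (skew_emb G u r) (fst x), snd x)"
      using e tensor_coeff_emb_left_obj[of e "fst x" "snd x" r] by simp
  qed
  also have "\<dots> = (\<Sum>x\<leftarrow>xs. tensor_coeff e e (fst x, skew_mult G \<alpha> (snd x) (skew_emb G u r)))"
    by (rule coeff_sum_commutes) simp
  also have "\<dots> = coeff_sum xs e e * r"
    unfolding coeff_sum_def sum_list_mult_const[symmetric]
  proof (intro arg_cong[where f = sum_list] map_cong refl)
    fix x assume "x \<in> set xs"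
    then have "snd x \<in> skew_carrier G u" using xs_carrier by auto
    then show "tensor_coeff e e (fst x, skew_mult G \<alpha> (snd x) (skew_emb G u r)) =
        tensor_coeff e e x * r"
      using e tensor_coeff_emb_right_obj[of e "snd x" "fst x" r] by simp
  qed
  finally show ?thesis .
qed

lemma coeff_sum_ginv:
  assumes g: "g \<in> mor G"
  shows "coeff_sum xs g (ginv G g) = \<alpha> g (coeff_sum xs (src G g) (src G g) * u (ginv G g))"
proof -
  let ?e = "src G g"
  have in_carrier: "fst x \<in> skew_carrier G u" "snd x \<in> skew_carrier G u" if "x \<in> set xs" for x
    using that xs_carrier by auto
  have "coeff_sum xs g (ginv G g) =
      (\<Sum>x\<leftarrow>xs. tensor_coeff g ?e (fst x, skew_mult G \<alpha> (snd x) (skew_delta 1 g)))"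
    unfolding coeff_sum_def using g in_carrier
    by (intro arg_cong[where f = sum_list] map_cong) (simp_all add: tensor_coeff_delta_right_src)
  also have "\<dots> = (\<Sum>x\<leftarrow>xs. tensor_coeff g ?e (skew_mult G \<alpha> (skew_delta 1 g) (fst x), snd x))"
    using g by (intro coeff_sum_commutes[symmetric]) simp
  also have "\<dots> = (\<Sum>x\<leftarrow>xs. \<alpha> g (tensor_coeff ?e ?e x * u (ginv G g)))"
    using g in_carrier
    by (intro arg_cong[where f = sum_list] map_cong) (simp_all add: tensor_coeff_delta_left_src)
  also have "\<dots> = \<alpha> g (coeff_sum xs ?e ?e * u (ginv G g))"
    unfolding coeff_sum_def sum_list_mult_const[symmetric] using g by (simp add: alpha_sum_list)
  finally show ?thesis .
qed

lemma sum_coeff_sum_obj_mult_u: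
  assumes orth: "\<forall>e\<in>obj G. \<forall>f\<in>obj G. e \<noteq> f \<longrightarrow> u e * u f = 0" and g: "g \<in> mor G"
  shows "(\<Sum>e\<in>obj G. coeff_sum xs e e) * u (ginv G g) =
    coeff_sum xs (src G g) (src G g) * u (ginv G g)"
proof -
  have "coeff_sum xs e e * u (ginv G g) = 0" if e: "e \<in> obj G" "e \<noteq> src G g" for e
  proof -
    have "u (src G g) * u (ginv G g) = u (ginv G g)"
      using g u_mult_u_tgt[of "ginv G g"] u_commute[of "ginv G g" "u (src G g)"] by simp
    then have "coeff_sum xs e e * u (ginv G g) =
        coeff_sum xs e e * u e * (u (src G g) * u (ginv G g))"
      using coeff_sum_obj_mult_u[OF e(1)] by simp
    also have "\<dots> = coeff_sum xs e e * (u e * u (src G g)) * u (ginv G g)"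
      by (simp only: mult.assoc)
    finally show ?thesis using orth e g by simp
  qed
  then have "(\<Sum>e\<in>obj G. coeff_sum xs e e * u (ginv G g)) =
      coeff_sum xs (src G g) (src G g) * u (ginv G g)"
    using g finite_obj by (simp add: sum.remove[of _ "src G g"] sum.neutral)
  then show ?thesis by (simp add: sum_distrib_right)
qed

end

lemma sum_coeff_sum_ginv_eq_u:
  assumes xs_carrier: "set xs \<subseteq> skew_carrier G u \<times> skew_carrier G u"
    and xs_mult: "foldr (\<lambda>(a, b) acc. skew_add (skew_mult G \<alpha> a b) acc) xs skew_zero = skew_one G u"
    and e: "e \<in> obj G"
  shows "(\<Sum>g | g \<in> mor G \<and> tgt G g = e. coeff_sum xs g (ginv G g)) = u e"
proof -
  have "u e = (\<Sum>x\<leftarrow>xs. skew_mult G \<alpha> (fst x) (snd x) e)"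
    using fun_cong[OF xs_mult, of e] e by (simp add: foldr_skew_add skew_one_def)
  also have "\<dots> = (\<Sum>x\<leftarrow>xs. \<Sum>g | g \<in> mor G \<and> tgt G g = e. tensor_coeff g (ginv G g) x)"
    using xs_carrier e
    by (intro arg_cong[where f = sum_list] map_cong) (auto simp: skew_mult_at_obj tensor_coeff_def)
  also have "\<dots> = (\<Sum>g | g \<in> mor G \<and> tgt G g = e. coeff_sum xs g (ginv G g))"
    by (simp add: coeff_sum_def sum_list_sum_commute)
  finally show ?thesis by simp
qed

lemma trace_condition_if_separable:
  assumes orth: "\<forall>e\<in>obj G. \<forall>f\<in>obj G. e \<noteq> f \<longrightarrow> u e * u f = 0"
    and sep: "separable_ext (skew_carrier G u) skew_add (skew_mult G \<alpha>) skew_zero (skew_one G u)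
                (range (skew_emb G u))"
  shows "\<exists>a\<in>center. \<forall>e\<in>obj G. trace_j G u \<alpha> e a = u e"
proof -
  obtain xs where xs: "set xs \<subseteq> skew_carrier G u \<times> skew_carrier G u"
    "foldr (\<lambda>(a, b) acc. skew_add (skew_mult G \<alpha> a b) acc) xs skew_zero = skew_one G u"
    "\<forall>s\<in>skew_carrier G u.
      skew_tens_eq (map (\<lambda>(a, b). (skew_mult G \<alpha> s a, b)) xs)
        (map (\<lambda>(a, b). (a, skew_mult G \<alpha> b s)) xs)"
    using sep unfolding separable_ext_def by blast
  define a where "a = (\<Sum>e\<in>obj G. coeff_sum xs e e)"
  have "a \<in> center"
    unfolding center_def a_def using coeff_sum_obj_commute[OF xs(1,3)]
    by (simp add: sum_distrib_left sum_distrib_right)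
  moreover have "trace_j G u \<alpha> e a = u e" if e: "e \<in> obj G" for e
  proof -
    have "trace_j G u \<alpha> e a = (\<Sum>g | g \<in> mor G \<and> tgt G g = e. coeff_sum xs g (ginv G g))"
      unfolding trace_j_eq[OF e] a_def
      using coeff_sum_ginv[OF xs(1,3)] sum_coeff_sum_obj_mult_u[OF xs(1,3) orth]
      by (intro sum.cong) simp_all
    then show ?thesis using sum_coeff_sum_ginv_eq_u[OF xs(1,2) e] by simp
  qed
  ultimately show ?thesis by blast
qed

end

section \<open>A central element of trace one yields a separability element\<close>

context finite_partial_action
begin

lemma skew_mult_delta_ginv_central:
  assumes a: "a \<in> center" and s: "s \<in> skew_carrier G u"
    and p: "p \<in> mor G" and q: "q \<in> mor G" and pq: "src G p = tgt G q"
  shows "skew_mult G \<alpha> s (skew_delta (\<alpha> (ginv G q) (a * u q)) (ginv G q)) p * u (cmp G p q)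
       = \<alpha> p (a * u (ginv G p)) * s (cmp G p q)"
proof -
  define k where "k = cmp G p q"
  define b where "b = \<alpha> p (a * u (ginv G p))"
  let ?c = "\<alpha> (ginv G q) (a * u q)"
  have k: "k \<in> mor G" unfolding k_def using p q pq by simp
  have c: "?c \<in> Aid u (ginv G q)" using q alpha_in_Aid[of "ginv G q" "a * u q"] by simp
  have sk: "s k \<in> Aid u k" using s k by simp
  have b: "b \<in> center" "b * u k = u k * b"
    unfolding b_def using alpha_center[OF a p] center_def by auto
  have "skew_mult G \<alpha> s (skew_delta ?c (ginv G q)) p = \<alpha> k (\<alpha> (ginv G k) (s k) * ?c)"
    using p q pq c by (simp add: skew_mult_delta_right k_def)
  also have "\<dots> = s k * \<alpha> k (?c * u (ginv G k))"
    using k sk alpha_in_Aid[of "ginv G k" "s k"] by (simp add: alpha_mult_u)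
  also have "\<alpha> k (?c * u (ginv G k)) = b * u k"
    unfolding k_def b_def using alpha_cmp_ginv[OF p q pq, of a] .
  finally have "skew_mult G \<alpha> s (skew_delta ?c (ginv G q)) p * u k = s k * (b * u k) * u k" by simp
  also have "\<dots> = s k * u k * b * u k" using b(2) by (simp add: mult.assoc)
  also have "\<dots> = b * s k * u k" using b(1) sk k unfolding center_def by simp
  also have "\<dots> = b * s k" using sk k by (simp add: mult.assoc)
  finally show ?thesis unfolding k_def b_def .
qed

definition separability_element :: "'a \<Rightarrow> 'g list \<Rightarrow> (('g \<Rightarrow> 'a) \<times> ('g \<Rightarrow> 'a)) list" where
  "separability_element a gs =
    map (\<lambda>g. (skew_delta (\<alpha> g (a * u (ginv G g))) g, skew_delta 1 (ginv G g))) gs"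

context
  fixes gs :: "'g list"
  assumes gs: "set gs = mor G" "distinct gs"
begin

lemma separability_element_carrier:
  "set (separability_element a gs) \<subseteq> skew_carrier G u \<times> skew_carrier G u"
  using gs by (auto simp: separability_element_def)

lemma separability_element_mult:
  assumes trace: "\<forall>e\<in>obj G. trace_j G u \<alpha> e a = u e"
  shows "foldr (\<lambda>(x, y) acc. skew_add (skew_mult G \<alpha> x y) acc) (separability_element a gs) skew_zero
       = skew_one G u" (is "?prod = _")
proof
  fix k
  have "?prod k = (\<Sum>g\<in>mor G. if k = tgt G g then \<alpha> g (a * u (ginv G g)) else 0)"
    using gs
    by (simp add: foldr_skew_add separability_element_def o_def sum_list_distinct_conv_sum_set
        skew_mult_delta_delta_ginv cong: sum.cong)
  also have "\<dots> = skew_one G u k"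
  proof (cases "k \<in> obj G")
    case True
    then show ?thesis
      using trace trace_j_eq[OF True, of a] finite_mor
      by (simp add: skew_one_def sum.If_cases Int_def conj_commute eq_commute)
  next
    case False
    then have "\<forall>g\<in>mor G. k \<noteq> tgt G g" by auto
    then show ?thesis using False by (simp add: skew_one_def)
  qed
  finally show "?prod k = skew_one G u k" .
qed

lemma coeff_sum_mult_left_separability_element:
  assumes a: "a \<in> center" and s: "s \<in> skew_carrier G u" and p: "p \<in> mor G" and q: "q \<in> mor G"
  shows "coeff_sum (map (\<lambda>(x, y). (skew_mult G \<alpha> s x, y)) (separability_element a gs)) p q
       = (if src G p = tgt G q then \<alpha> p (a * u (ginv G p)) * s (cmp G p q) else 0)"
proof -
  let ?f = "\<lambda>g. skew_mult G \<alpha> s (skew_delta (\<alpha> g (a * u (ginv G g))) g)"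
  have "tensor_coeff p q (?f g, skew_delta 1 (ginv G g))
      = (if g = ginv G q then ?f (ginv G q) p * \<alpha> p (u q * u (ginv G p)) else 0)"
    if g: "g \<in> mor G" for g
  proof (cases "g = ginv G q")
    case False
    then have "q \<noteq> ginv G g" using g by auto
    then show ?thesis using False p by (simp add: tensor_coeff_def skew_delta_def)
  qed (use q in \<open>simp add: tensor_coeff_def skew_delta_def\<close>)
  then have "coeff_sum (map (\<lambda>(x, y). (skew_mult G \<alpha> s x, y)) (separability_element a gs)) p q
      = ?f (ginv G q) p * \<alpha> p (u q * u (ginv G p))"
    using gs q finite_mor
    by (simp add: coeff_sum_def separability_element_def sum_list_distinct_conv_sum_set o_def)
  also have "\<dots> = (if src G p = tgt G q then \<alpha> p (a * u (ginv G p)) * s (cmp G p q) else 0)"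
  proof (cases "src G p = tgt G q")
    case True
    have "?f (ginv G q) p \<in> Aid u p" using s p q by simp
    moreover have "\<alpha> p (u q * u (ginv G p)) = u p * u (cmp G p q)"
      using alpha_u_mult_u[OF p q True] q by (simp add: u_commute[of q])
    ultimately show ?thesis
      using skew_mult_delta_ginv_central[OF a s p q True] p q True by (simp flip: mult.assoc)
  next
    case False
    then show ?thesis using p q by (simp add: skew_mult_delta_right)
  qed
  finally show ?thesis .
qed

lemma coeff_sum_mult_right_separability_element:
  assumes s: "s \<in> skew_carrier G u" and p: "p \<in> mor G" and q: "q \<in> mor G"
  shows "coeff_sum (map (\<lambda>(x, y). (x, skew_mult G \<alpha> y s)) (separability_element a gs)) p q
       = (if src G p = tgt G q then \<alpha> p (a * u (ginv G p)) * s (cmp G p q) else 0)"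
proof -
  let ?b = "\<alpha> p (a * u (ginv G p))"
  let ?t = "skew_mult G \<alpha> (skew_delta 1 (ginv G p)) s q"
  have "tensor_coeff p q
        (skew_delta (\<alpha> g (a * u (ginv G g))) g, skew_mult G \<alpha> (skew_delta 1 (ginv G g)) s)
      = (if g = p then ?b * \<alpha> p (?t * u (ginv G p)) else 0)" for g
    using p by (cases "g = p") (simp_all add: tensor_coeff_def skew_delta_def)
  then have "coeff_sum (map (\<lambda>(x, y). (x, skew_mult G \<alpha> y s)) (separability_element a gs)) p q
      = ?b * \<alpha> p (?t * u (ginv G p))"
    using gs p finite_mor
    by (simp add: coeff_sum_def separability_element_def sum_list_distinct_conv_sum_set o_def)
  also have "\<dots> = (if src G p = tgt G q then ?b * s (cmp G p q) else 0)"
  proof (cases "src G p = tgt G q")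
    case True
    have "?t = \<alpha> (ginv G p) (u p * s (cmp G p q))"
      using p q True alpha_u[of "ginv G p"] by (simp add: skew_mult_delta_left)
    moreover have "u p * s (cmp G p q) \<in> Aid u p" using p by simp
    ultimately have "\<alpha> p (?t * u (ginv G p)) = u p * s (cmp G p q)"
      using p alpha_in_Aid[of "ginv G p" "u p * s (cmp G p q)"] by simp
    then show ?thesis using p True by (simp flip: mult.assoc)
  next
    case False
    then show ?thesis using p q by (simp add: skew_mult_delta_left)
  qed
  finally show ?thesis .
qed

lemma separable_if_trace_condition:
  assumes a: "a \<in> center" and trace: "\<forall>e\<in>obj G. trace_j G u \<alpha> e a = u e"
  shows "separable_ext (skew_carrier G u) skew_add (skew_mult G \<alpha>) skew_zero (skew_one G u)
           (range (skew_emb G u))"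
  unfolding separable_ext_def
proof (intro exI conjI ballI)
  show "set (separability_element a gs) \<subseteq> skew_carrier G u \<times> skew_carrier G u"
    by (rule separability_element_carrier)
  show "foldr (\<lambda>(x, y) acc. skew_add (skew_mult G \<alpha> x y) acc) (separability_element a gs) skew_zero
      = skew_one G u"
    by (rule separability_element_mult[OF trace])
  fix s assume s: "s \<in> skew_carrier G u"
  show "skew_tens_eq (map (\<lambda>(x, y). (skew_mult G \<alpha> s x, y)) (separability_element a gs))
                     (map (\<lambda>(x, y). (x, skew_mult G \<alpha> y s)) (separability_element a gs))"
    using separability_element_carrier[of a] s
    by (subst tens_eq_iff_coeff_sum_eq)
      (auto simp: coeff_sum_mult_left_separability_element[OF a s]
        coeff_sum_mult_right_separability_element[OF s])
qed

end

end

theorem theorem3p2: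
  fixes G :: "'g groupoid" and u :: "'g \<Rightarrow> 'a::ring_1" and \<alpha> :: "'g \<Rightarrow> 'a \<Rightarrow> 'a"
  assumes "is_groupoid G" and "finite (mor G)" and "connected_groupoid G"
    and "unital_partial_action G u \<alpha>"
    and "(\<Sum>e\<in>obj G. u e) = 1"
    and "\<forall>e\<in>obj G. \<forall>f\<in>obj G. e \<noteq> f \<longrightarrow> u e * u f = 0"
  shows "separable_ext (skew_carrier G u) skew_add (skew_mult G \<alpha>) skew_zero (skew_one G u)
            (skew_emb G u ` UNIV)
         \<longleftrightarrow> (\<exists>a\<in>center. \<forall>e\<in>obj G. trace_j G u \<alpha> e a = u e)"
proof -
  interpret finite_partial_action G u \<alpha>
    using assms(1,2,4) by unfold_locales
  obtain gs where gs: "set gs = mor G" "distinct gs"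
    using finite_distinct_list[OF finite_mor] by blast
  show ?thesis
    using trace_condition_if_separable[OF assms(6)] separable_if_trace_condition[OF gs] by blast
qed

end
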